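(* For every $\gamma\in[0,1)$, with $\tau_\gamma$ and $Y^*_\gamma$ as described below, $\mathcal R(\gamma)=\mathbf E\big(Z\mid Y^*_\gamma\neq 0\big)$, where $Z:=\min(\eta(X),1-\eta(X))=\frac{p_1f_1\wedge p_2f_2}{p_1f_1+p_2f_2}(X)$; equivalently, $\mathcal R(\gamma)$ is the conditional expectation of $Z$ given that $Z<1-\tau_\gamma$ or that $X$ lies in the part of the boundary $\{Z=1-\tau_\gamma\}$ on which a decision is made. Moreover, the map $\gamma\mapsto\mathcal R(\gamma)$ is continuous and non-increasing on $[0,1)$.
   Context: Setup (binary classification with indecisions). $(\mathcal X,\mathcal U)$ is a measurable space with a $\sigma$-finite measure $\mu$; $P_1\neq P_2$ are probability measures with densities $f_1,f_2$ with respect to $\mu$; $p_1,p_2>0$, $p_1+p_2=1$; $\mathbf P(Y=i)=p_i$ and given $Y=i$, $X\sim P_i$. A classifier is a measurable $\tilde Y(X,U)\in\{0,1,2\}$ with $U\sim\mathrm{Unif}[0,1]$ independent of $(X,Y)$; $0$ means indecision. $\eta(x)=\frac{p_1f_1(x)}{p_1f_1(x)+p_2f_2(x)}$. $\mathcal R(\gamma):=\inf\mathbf P(\tilde Y\neq Y\mid\tilde Y\neq0)$ over classifiers with $\mathbf P(\tilde Y=0)=\gamma$. The oracle classifier $Y^*_\gamma$: for a threshold $\tau_\gamma\in[1/2,1]$, $\mathbf P(Y^*_\gamma=0)=\gamma$, a.s. $\{1-\tau_\gamma<\eta(X)<\tau_\gamma\}\subset\{Y^*_\gamma=0\}\subset\{1-\tau_\gamma\le\eta(X)\le\tau_\gamma\}$,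 and $Y^*_\gamma=\arg\max_{i\in\{1,2\}}p_if_i(X)$ on $\{Y^*_\gamma\ne0\}$; such a classifier attains $\mathcal R(\gamma)$. *)

theory Defs
  imports "HOL-Analysis.Analysis"
begin

definition eta :: "real \<Rightarrow> real \<Rightarrow> ('a \<Rightarrow> real) \<Rightarrow> ('a \<Rightarrow> real) \<Rightarrow> 'a \<Rightarrow> real" where
  "eta p1 p2 f1 f2 x = p1 * f1 x / (p1 * f1 x + p2 * f2 x)"

definition Zfun :: "real \<Rightarrow> real \<Rightarrow> ('a \<Rightarrow> real) \<Rightarrow> ('a \<Rightarrow> real) \<Rightarrow> 'a \<Rightarrow> real" where
  "Zfun p1 p2 f1 f2 x = min (eta p1 p2 f1 f2 x) (1 - eta p1 p2 f1 f2 x)"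

text \<open>Joint law of (Y, X, U): Y in {1,2} with P(Y=i) = p_i, X given Y=i has density f_i
  w.r.t. M, and U uniform on [0,1] independent of (X,Y).\<close>
definition joint :: "'a measure \<Rightarrow> real \<Rightarrow> real \<Rightarrow> ('a \<Rightarrow> real) \<Rightarrow> ('a \<Rightarrow> real)
    \<Rightarrow> (nat \<times> 'a \<times> real) measure" where
  "joint M p1 p2 f1 f2 =
     density (count_space {1, 2} \<Otimes>\<^sub>M (M \<Otimes>\<^sub>M lborel))
       (\<lambda>(i, x, u). ennreal ((if i = 1 then p1 * f1 x else p2 * f2 x) * indicator {0..1} u))"

text \<open>A (randomized) classifier: measurable function of (X,U) with values in {0,1,2};
  the value 0 means indecision.\<close>
definition classifier :: "'a measure \<Rightarrow> ('a \<Rightarrow> real \<Rightarrow> nat) \<Rightarrow> bool" where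
  "classifier M g \<longleftrightarrow>
     (\<lambda>(x, u). g x u) \<in> (M \<Otimes>\<^sub>M borel) \<rightarrow>\<^sub>M count_space UNIV \<and> (\<forall>x u. g x u \<in> {0, 1, 2})"

definition indecision_prob :: "(nat \<times> 'a \<times> real) measure \<Rightarrow> ('a \<Rightarrow> real \<Rightarrow> nat) \<Rightarrow> real" where
  "indecision_prob J g = measure J {(i, x, u) \<in> space J. g x u = 0}"

definition cond_error :: "(nat \<times> 'a \<times> real) measure \<Rightarrow> ('a \<Rightarrow> real \<Rightarrow> nat) \<Rightarrow> real" where
  "cond_error J g =
     measure J {(i, x, u) \<in> space J. g x u \<noteq> 0 \<and> g x u \<noteq> i}
     / measure J {(i, x, u) \<in> space J. g x u \<noteq> 0}"

definition Rrisk :: "'a measure \<Rightarrow> real \<Rightarrow> real \<Rightarrow> ('a \<Rightarrow> real) \<Rightarrow> ('a \<Rightarrow> real) \<Rightarrow> real \<Rightarrow> real" where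
  "Rrisk M p1 p2 f1 f2 \<gamma> =
     Inf {cond_error (joint M p1 p2 f1 f2) g | g. classifier M g \<and>
            indecision_prob (joint M p1 p2 f1 f2) g = \<gamma>}"

definition is_oracle :: "'a measure \<Rightarrow> real \<Rightarrow> real \<Rightarrow> ('a \<Rightarrow> real) \<Rightarrow> ('a \<Rightarrow> real)
    \<Rightarrow> real \<Rightarrow> real \<Rightarrow> ('a \<Rightarrow> real \<Rightarrow> nat) \<Rightarrow> bool" where
  "is_oracle M p1 p2 f1 f2 \<gamma> \<tau> g \<longleftrightarrow>
     classifier M g \<and> 1/2 \<le> \<tau> \<and> \<tau> \<le> 1 \<and>
     indecision_prob (joint M p1 p2 f1 f2) g = \<gamma> \<and>
     (AE (i, x, u) in joint M p1 p2 f1 f2.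
        (1 - \<tau> < eta p1 p2 f1 f2 x \<and> eta p1 p2 f1 f2 x < \<tau> \<longrightarrow> g x u = 0) \<and>
        (g x u = 0 \<longrightarrow> 1 - \<tau> \<le> eta p1 p2 f1 f2 x \<and> eta p1 p2 f1 f2 x \<le> \<tau>) \<and>
        (g x u = 1 \<longrightarrow> p1 * f1 x \<ge> p2 * f2 x) \<and>
        (g x u = 2 \<longrightarrow> p2 * f2 x \<ge> p1 * f1 x))"

definition cond_exp_Z :: "'a measure \<Rightarrow> real \<Rightarrow> real \<Rightarrow> ('a \<Rightarrow> real) \<Rightarrow> ('a \<Rightarrow> real)
    \<Rightarrow> ('a \<Rightarrow> real \<Rightarrow> nat) \<Rightarrow> real" where
  "cond_exp_Z M p1 p2 f1 f2 g =
     (\<integral>\<omega>. Zfun p1 p2 f1 f2 (fst (snd \<omega>)) *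
            indicator {(i, x, u). g x u \<noteq> 0} \<omega> \<partial>joint M p1 p2 f1 f2)
     / measure (joint M p1 p2 f1 f2) {(i, x, u) \<in> space (joint M p1 p2 f1 f2). g x u \<noteq> 0}"

end

(* Conditionally on (X, U), a classifier that decides 1 (resp. 2) errs with probability
   1 - eta(X) (resp. eta(X)), which is at least Z = min(eta, 1 - eta), with equality for the
   Bayes decision.  So the error mass P(Y~ <> Y, Y~ <> 0) of any classifier is at least
   E(Z; Y~ <> 0), with equality for an oracle.  An oracle with threshold tau decides exactly
   where Z <= 1 - tau, so it minimises the Lagrangian E((Z - (1 - tau)); Y~ <> 0) pointwise;
   comparing classifiers with the same indecision probability gives R(gamma) = E(Z | Y* <> 0).
   Oracles exist for every gamma: take 1 - tau to be a quantile of Z and use U to decide on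
   the right fraction of the level set {Z = 1 - tau}.
   As a function of the decision probability m = 1 - gamma, A(m) = E(Z; Y* <> 0) has the
   thresholds 1 - tau in [0, 1/2] as subgradients (the same Lagrangian inequality), so it is
   1/2-Lipschitz; together with A(0) = 0 this makes R(1 - m) = A(m) / m non-decreasing in m. *)

theory Submission
  imports Defs "HOL-Probability.Distribution_Functions"
begin

lemma (in finite_borel_measure) exists_quantile:
  assumes "0 < s" and "s \<le> cdf M hi"
  shows "\<exists>c \<le> hi. measure M {..<c} \<le> s \<and> s \<le> cdf M c"
proof -
  define S where "S = {t. s \<le> cdf M t}"
  obtain b where b: "\<And>t. t \<le> b \<Longrightarrow> cdf M t < s"
    using order_tendstoD(2)[OF cdf_lim_at_bot \<open>0 < s\<close>] by (auto simp: eventually_at_bot_linorder)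
  have bdd: "bdd_below S"
    by (rule bdd_belowI[of _ b]) (metis S_def b mem_Collect_eq nle_le not_less)
  have "hi \<in> S" using assms by (simp add: S_def)
  define c where "c = Inf S"
  have "c \<le> hi" unfolding c_def by (rule cInf_lower[OF \<open>hi \<in> S\<close> bdd])
  have above: "s \<le> cdf M t" if "c < t" for t
  proof -
    obtain t' where "t' \<in> S" "t' < t"
      using \<open>c < t\<close> cInf_less_iff[of S t] \<open>hi \<in> S\<close> bdd unfolding c_def by auto
    then show ?thesis using cdf_nondecreasing[of t' t] by (simp add: S_def)
  qed
  have below: "cdf M t < s" if "t < c" for t
    using that cInf_lower[OF _ bdd, of t] unfolding c_def S_def by force
  have "s \<le> cdf M c"
    using cdf_is_right_cont[of c] above
    by (intro tendsto_lowerbound[where F="at_right c"])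
       (auto simp: continuous_within eventually_at_right_field intro: exI[of _ "c + 1"])
  moreover have "measure M {..<c} \<le> s"
    using below by (intro tendsto_upperbound[OF cdf_at_left])
      (auto simp: eventually_at_left_field less_imp_le intro: exI[of _ "c - 1"])
  ultimately show ?thesis using \<open>c \<le> hi\<close> by blast
qed

lemma subgradient_bounded_imp_lipschitz:
  fixes A c :: "real \<Rightarrow> real"
  assumes sub: "\<And>m m'. m \<in> S \<Longrightarrow> m' \<in> S \<Longrightarrow> A m + c m * (m' - m) \<le> A m'"
    and bound: "\<And>m. m \<in> S \<Longrightarrow> \<bar>c m\<bar> \<le> L" and "0 \<le> L"
  shows "L-lipschitz_on S A"
proof (rule lipschitz_onI)
  fix m m' assume "m \<in> S" "m' \<in> S"
  have "\<bar>c m * (m' - m)\<bar> \<le> L * \<bar>m - m'\<bar>" "\<bar>c m' * (m - m')\<bar> \<le> L * \<bar>m - m'\<bar>"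
    using bound[OF \<open>m \<in> S\<close>] bound[OF \<open>m' \<in> S\<close>]
    by (auto simp: abs_mult abs_minus_commute intro: mult_right_mono)
  then show "dist (A m) (A m') \<le> L * dist m m'"
    using sub[OF \<open>m \<in> S\<close> \<open>m' \<in> S\<close>] sub[OF \<open>m' \<in> S\<close> \<open>m \<in> S\<close>]
    by (auto simp: dist_real_def abs_le_iff)
qed fact

lemma subgradient_ratio_mono:
  fixes A c :: "real \<Rightarrow> real"
  assumes sub: "A m' + c m' * (m - m') \<le> A m"
    and below_chord: "A m' \<le> c m' * m'"
    and "0 < m'" "m' \<le> m"
  shows "A m' / m' \<le> A m / m"
proof -
  have "A m' * (m - m') \<le> c m' * m' * (m - m')"
    using below_chord \<open>m' \<le> m\<close> by (intro mult_right_mono) auto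
  then have "A m' * m \<le> A m * m'"
    using mult_right_mono[OF sub, of m'] \<open>0 < m'\<close> by (simp add: algebra_simps)
  then show ?thesis using \<open>0 < m'\<close> \<open>m' \<le> m\<close> by (simp add: divide_simps)
qed

lemma exists_interpolation_weight:
  fixes l d s :: real
  assumes "l \<le> s" "s \<le> l + d"
  obtains a where "0 \<le> a" "a \<le> 1" "l + a * d = s"
proof (cases "d = 0")
  case True
  with assms show ?thesis by (intro that[of 0]) auto
next
  case False
  with assms show ?thesis by (intro that[of "(s - l) / d"]) (auto simp: field_simps)
qed

lemma (in sigma_finite_measure) nn_integral_pair_measure_times:
  assumes [measurable]: "A \<in> borel_measurable N" "B \<in> borel_measurable M"
  shows "(\<integral>\<^sup>+ z. A (fst z) * B (snd z) \<partial>(N \<Otimes>\<^sub>M M)) = (\<integral>\<^sup>+ x. A x \<partial>N) * (\<integral>\<^sup>+ y. B y \<partial>M)"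
proof -
  have "(\<integral>\<^sup>+ z. A (fst z) * B (snd z) \<partial>(N \<Otimes>\<^sub>M M)) = (\<integral>\<^sup>+ x. A x * (\<integral>\<^sup>+ y. B y \<partial>M) \<partial>N)"
    by (simp add: nn_integral_fst[symmetric] nn_integral_cmult)
  also have "\<dots> = (\<integral>\<^sup>+ x. A x \<partial>N) * (\<integral>\<^sup>+ y. B y \<partial>M)"
    by (rule nn_integral_multc) measurable
  finally show ?thesis .
qed

locale classification_model =
  fixes M :: "'a measure" and f1 f2 :: "'a \<Rightarrow> real" and p1 p2 :: real
  assumes sigma_finite_M: "sigma_finite_measure M"
    and f1_measurable [measurable]: "f1 \<in> borel_measurable M"
    and f2_measurable [measurable]: "f2 \<in> borel_measurable M"
    and f1_nonneg: "\<And>x. x \<in> space M \<Longrightarrow> 0 \<le> f1 x"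
    and f2_nonneg: "\<And>x. x \<in> space M \<Longrightarrow> 0 \<le> f2 x"
    and f1_integral: "(\<integral>\<^sup>+ x. ennreal (f1 x) \<partial>M) = 1"
    and f2_integral: "(\<integral>\<^sup>+ x. ennreal (f2 x) \<partial>M) = 1"
    and p1_pos: "0 < p1" and p2_pos: "0 < p2" and p1_p2: "p1 + p2 = 1"
begin

abbreviation "J \<equiv> joint M p1 p2 f1 f2"
abbreviation "\<eta> \<equiv> eta p1 p2 f1 f2"
abbreviation "Z \<equiv> Zfun p1 p2 f1 f2"

definition mixture :: "'a \<Rightarrow> real" where
  "mixture x = p1 * f1 x + p2 * f2 x"

lemma weighted_densities_nonneg:
  assumes "x \<in> space M" shows "0 \<le> p1 * f1 x" "0 \<le> p2 * f2 x"
  using f1_nonneg[OF assms] f2_nonneg[OF assms] p1_pos p2_pos by simp_all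

lemma mixture_nonneg: "x \<in> space M \<Longrightarrow> 0 \<le> mixture x"
  using weighted_densities_nonneg[of x] by (simp add: mixture_def)

lemma eta_mixture:
  assumes "x \<in> space M"
  shows "\<eta> x * mixture x = p1 * f1 x" "(1 - \<eta> x) * mixture x = p2 * f2 x"
proof -
  have "p1 * f1 x = 0 \<and> p2 * f2 x = 0" if "mixture x = 0"
    using that weighted_densities_nonneg[OF assms] by (simp add: mixture_def add_nonneg_eq_0_iff)
  then show "\<eta> x * mixture x = p1 * f1 x" "(1 - \<eta> x) * mixture x = p2 * f2 x"
    by (auto simp: eta_def mixture_def[symmetric] field_simps)
qed

lemma eta_bounds:
  assumes "x \<in> space M" shows "0 \<le> \<eta> x" "\<eta> x \<le> 1"
  using weighted_densities_nonneg[OF assms] by (auto simp: eta_def divide_le_eq_1)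

lemma Z_bounds:
  assumes "x \<in> space M" shows "0 \<le> Z x" "Z x \<le> 1/2"
  using eta_bounds[OF assms] by (auto simp: Zfun_def min_def)

lemma eta_measurable [measurable]: "\<eta> \<in> borel_measurable M"
  unfolding eta_def[abs_def] by measurable

lemma Z_measurable [measurable]: "Z \<in> borel_measurable M"
  unfolding Zfun_def[abs_def] by measurable

lemma mixture_measurable [measurable]: "mixture \<in> borel_measurable M"
  unfolding mixture_def[abs_def] by measurable

lemma sets_joint [measurable_cong]:
  "sets J = sets (count_space {1, 2} \<Otimes>\<^sub>M (M \<Otimes>\<^sub>M lborel))"
  unfolding joint_def by (rule sets_density)

lemma space_joint: "space J = {1, 2} \<times> space M \<times> UNIV"
  by (simp add: joint_def space_pair_measure)

lemma nn_integral_joint: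
  assumes [measurable]: "F \<in> borel_measurable J"
    and F_nonneg: "\<And>\<omega>. \<omega> \<in> space J \<Longrightarrow> 0 \<le> F \<omega>"
  shows "(\<integral>\<^sup>+ \<omega>. ennreal (F \<omega>) \<partial>J) =
    (\<integral>\<^sup>+ z. ennreal ((p1 * f1 (fst z) * F (1, z) + p2 * f2 (fst z) * F (2, z)) * indicator {0..1} (snd z))
      \<partial>(M \<Otimes>\<^sub>M lborel))" (is "_ = ?rhs")
proof -
  interpret N: sigma_finite_measure "M \<Otimes>\<^sub>M lborel"
    by (intro sigma_finite_pair_measure sigma_finite_M lborel.sigma_finite_measure_axioms)
  define d where "d i x (u::real) = (if i = (1::nat) then p1 * f1 x else p2 * f2 x) * indicator {0..1} u" for i x u
  have [measurable]: "(\<lambda>\<omega>. d (fst \<omega>) (fst (snd \<omega>)) (snd (snd \<omega>))) \<in> borel_measurable (count_space {1, 2} \<Otimes>\<^sub>M (M \<Otimes>\<^sub>M lborel))"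
    unfolding d_def by measurable
  have density_form: "J = density (count_space {1, 2} \<Otimes>\<^sub>M (M \<Otimes>\<^sub>M lborel)) (\<lambda>\<omega>. ennreal (d (fst \<omega>) (fst (snd \<omega>)) (snd (snd \<omega>))))"
    unfolding joint_def d_def by (simp add: case_prod_beta')
  have meas: "(\<lambda>\<omega>. ennreal (d (fst \<omega>) (fst (snd \<omega>)) (snd (snd \<omega>))) * ennreal (F \<omega>)) \<in> borel_measurable (count_space {1, 2} \<Otimes>\<^sub>M (M \<Otimes>\<^sub>M lborel))"
    by measurable
  have "(\<integral>\<^sup>+ \<omega>. ennreal (F \<omega>) \<partial>J) =
      (\<integral>\<^sup>+ \<omega>. ennreal (d (fst \<omega>) (fst (snd \<omega>)) (snd (snd \<omega>))) * ennreal (F \<omega>) \<partial>(count_space {1, 2} \<Otimes>\<^sub>M (M \<Otimes>\<^sub>M lborel)))"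
    unfolding density_form by (rule nn_integral_density) measurable
  also have "\<dots> = (\<Sum>i\<in>{1, 2}. \<integral>\<^sup>+ z. ennreal (d i (fst z) (snd z)) * ennreal (F (i, z)) \<partial>(M \<Otimes>\<^sub>M lborel))"
    using N.nn_integral_fst[OF meas] by (simp add: nn_integral_count_space_finite)
  also have "\<dots> = (\<integral>\<^sup>+ z. ennreal (d 1 (fst z) (snd z)) * ennreal (F (1, z)) \<partial>(M \<Otimes>\<^sub>M lborel)) +
      (\<integral>\<^sup>+ z. ennreal (d 2 (fst z) (snd z)) * ennreal (F (2, z)) \<partial>(M \<Otimes>\<^sub>M lborel))"
    by simp
  also have "\<dots> = (\<integral>\<^sup>+ z. ennreal (d 1 (fst z) (snd z)) * ennreal (F (1, z)) +
      ennreal (d 2 (fst z) (snd z)) * ennreal (F (2, z)) \<partial>(M \<Otimes>\<^sub>M lborel))"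
  proof (rule nn_integral_add[symmetric])
    have "(\<lambda>z. (i, z)) \<in> M \<Otimes>\<^sub>M lborel \<rightarrow>\<^sub>M count_space {1, 2} \<Otimes>\<^sub>M (M \<Otimes>\<^sub>M lborel)" if "i \<in> {1, 2::nat}" for i
      using that by (intro measurable_Pair measurable_const measurable_ident_sets) auto
    from measurable_compose[OF this meas] show "(\<lambda>z. ennreal (d 1 (fst z) (snd z)) * ennreal (F (1, z))) \<in> borel_measurable (M \<Otimes>\<^sub>M lborel)"
      "(\<lambda>z. ennreal (d 2 (fst z) (snd z)) * ennreal (F (2, z))) \<in> borel_measurable (M \<Otimes>\<^sub>M lborel)"
      by simp_all
  qed
  also have "\<dots> = ?rhs"
  proof (rule nn_integral_cong)
    fix z :: "'a \<times> real" assume "z \<in> space (M \<Otimes>\<^sub>M lborel)"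
    then have "(1, z) \<in> space J" "(2, z) \<in> space J" "fst z \<in> space M"
      by (auto simp: space_joint space_pair_measure)
    then show "ennreal (d 1 (fst z) (snd z)) * ennreal (F (1, z)) + ennreal (d 2 (fst z) (snd z)) * ennreal (F (2, z)) =
      ennreal ((p1 * f1 (fst z) * F (1, z) + p2 * f2 (fst z) * F (2, z)) * indicator {0..1} (snd z))"
      using F_nonneg weighted_densities_nonneg
      by (auto simp: d_def indicator_def ennreal_mult[symmetric] ennreal_plus[symmetric] simp del: ennreal_plus)
  qed
  finally show ?thesis .
qed

lemma nn_integral_mixture: "(\<integral>\<^sup>+ x. ennreal (mixture x) \<partial>M) = 1"
proof -
  have "(\<integral>\<^sup>+ x. ennreal (mixture x) \<partial>M) = (\<integral>\<^sup>+ x. ennreal p1 * ennreal (f1 x) + ennreal p2 * ennreal (f2 x) \<partial>M)"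
    using p1_pos p2_pos f1_nonneg f2_nonneg
    by (intro nn_integral_cong) (simp add: mixture_def ennreal_mult[symmetric] ennreal_plus[symmetric] del: ennreal_plus)
  also have "\<dots> = ennreal p1 * (\<integral>\<^sup>+ x. ennreal (f1 x) \<partial>M) + ennreal p2 * (\<integral>\<^sup>+ x. ennreal (f2 x) \<partial>M)"
    by (simp add: nn_integral_add nn_integral_cmult)
  also have "\<dots> = 1"
    using p1_pos p2_pos p1_p2 by (simp add: f1_integral f2_integral ennreal_plus[symmetric] del: ennreal_plus)
  finally show ?thesis .
qed

lemma emeasure_joint_rectangle:
  assumes [measurable]: "B \<in> sets M" "C \<in> sets borel"
  shows "emeasure J {\<omega> \<in> space J. fst (snd \<omega>) \<in> B \<and> snd (snd \<omega>) \<in> C} =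
    (\<integral>\<^sup>+ x. ennreal (mixture x * indicator B x) \<partial>M) * emeasure lborel (C \<inter> {0..1})"
proof -
  define R where "R = {\<omega> \<in> space J. fst (snd \<omega>) \<in> B \<and> snd (snd \<omega>) \<in> C}"
  have [measurable]: "R \<in> sets J" unfolding R_def by measurable
  have "emeasure J R = (\<integral>\<^sup>+ \<omega>. ennreal (indicator R \<omega>) \<partial>J)"
    by (simp add: ennreal_indicator)
  also have "\<dots> = (\<integral>\<^sup>+ z. ennreal ((p1 * f1 (fst z) * indicator R (1, z) + p2 * f2 (fst z) * indicator R (2, z))
      * indicator {0..1} (snd z)) \<partial>(M \<Otimes>\<^sub>M lborel))"
    by (rule nn_integral_joint) auto
  also have "\<dots> = (\<integral>\<^sup>+ z. ennreal (mixture (fst z) * indicator B (fst z)) *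
      ennreal (indicator (C \<inter> {0..1}) (snd z)) \<partial>(M \<Otimes>\<^sub>M lborel))"
  proof (rule nn_integral_cong)
    fix z :: "'a \<times> real" assume "z \<in> space (M \<Otimes>\<^sub>M lborel)"
    then have "fst z \<in> space M" by (auto simp: space_pair_measure)
    then show "ennreal ((p1 * f1 (fst z) * indicator R (1, z) + p2 * f2 (fst z) * indicator R (2, z)) * indicator {0..1} (snd z)) =
      ennreal (mixture (fst z) * indicator B (fst z)) * ennreal (indicator (C \<inter> {0..1}) (snd z))"
      using mixture_nonneg[of "fst z"]
      by (cases z) (auto simp: R_def space_joint indicator_def mixture_def ennreal_mult[symmetric])
  qed
  also have "\<dots> = (\<integral>\<^sup>+ x. ennreal (mixture x * indicator B x) \<partial>M) * emeasure lborel (C \<inter> {0..1})"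
    by (subst lborel.nn_integral_pair_measure_times) (simp_all add: ennreal_indicator)
  finally show ?thesis unfolding R_def .
qed

lemma prob_space_joint: "prob_space J"
proof
  have "space J = {\<omega> \<in> space J. fst (snd \<omega>) \<in> space M \<and> snd (snd \<omega>) \<in> UNIV}"
    by (auto simp: space_joint)
  moreover have "(\<integral>\<^sup>+ x. ennreal (mixture x * indicator (space M) x) \<partial>M) = 1"
    using nn_integral_mixture by (simp cong: nn_integral_cong)
  ultimately show "emeasure J (space J) = 1"
    using emeasure_joint_rectangle[of "space M" UNIV] by simp
qed

sublocale joint: prob_space J
  by (rule prob_space_joint)

lemma AE_joint_mixture_pos: "AE \<omega> in J. 0 < mixture (fst (snd \<omega>))"
proof -
  define B where "B = {x \<in> space M. mixture x = 0}"
  have [measurable]: "B \<in> sets M" unfolding B_def by measurable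
  have "(\<integral>\<^sup>+ x. ennreal (mixture x * indicator B x) \<partial>M) = 0"
    by (simp add: B_def indicator_def nn_integral_0_iff_AE)
  then have "{\<omega> \<in> space J. fst (snd \<omega>) \<in> B \<and> snd (snd \<omega>) \<in> UNIV} \<in> null_sets J"
    using emeasure_joint_rectangle[of B UNIV] by (simp add: null_sets_def)
  then show ?thesis
    by (rule AE_I') (use mixture_nonneg in \<open>force simp: B_def space_joint\<close>)
qed

lemma nn_integral_joint_average_label:
  assumes [measurable]: "F \<in> borel_measurable J"
    and F_nonneg: "\<And>\<omega>. \<omega> \<in> space J \<Longrightarrow> 0 \<le> F \<omega>"
  shows "(\<integral>\<^sup>+ \<omega>. ennreal (F \<omega>) \<partial>J) =
    (\<integral>\<^sup>+ \<omega>. ennreal (\<eta> (fst (snd \<omega>)) * F (1, snd \<omega>) + (1 - \<eta> (fst (snd \<omega>))) * F (2, snd \<omega>)) \<partial>J)"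
    (is "_ = ?rhs")
proof -
  have "(\<lambda>\<omega>. (i, snd \<omega>)) \<in> J \<rightarrow>\<^sub>M J" if "i \<in> {1, 2}" for i
    using that unfolding measurable_cong_sets[OF sets_joint sets_joint]
    by (intro measurable_Pair measurable_const measurable_snd) auto
  note [measurable] = measurable_compose[OF this assms(1)]
  have "(\<integral>\<^sup>+ \<omega>. ennreal (F \<omega>) \<partial>J) =
      (\<integral>\<^sup>+ z. ennreal ((p1 * f1 (fst z) * F (1, z) + p2 * f2 (fst z) * F (2, z)) * indicator {0..1} (snd z))
        \<partial>(M \<Otimes>\<^sub>M lborel))"
    by (rule nn_integral_joint) (auto simp: F_nonneg)
  also have "\<dots> = (\<integral>\<^sup>+ z. ennreal ((p1 * f1 (fst z) + p2 * f2 (fst z)) *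
      (\<eta> (fst z) * F (1, z) + (1 - \<eta> (fst z)) * F (2, z)) * indicator {0..1} (snd z)) \<partial>(M \<Otimes>\<^sub>M lborel))"
  proof (rule nn_integral_cong)
    fix z :: "'a \<times> real" assume "z \<in> space (M \<Otimes>\<^sub>M lborel)"
    then have "fst z \<in> space M" by (auto simp: space_pair_measure)
    from eta_mixture[OF this] show "ennreal ((p1 * f1 (fst z) * F (1, z) + p2 * f2 (fst z) * F (2, z)) * indicator {0..1} (snd z)) =
      ennreal ((p1 * f1 (fst z) + p2 * f2 (fst z)) *
      (\<eta> (fst z) * F (1, z) + (1 - \<eta> (fst z)) * F (2, z)) * indicator {0..1} (snd z))"
      by (simp add: mixture_def algebra_simps)
  qed
  also have "\<dots> = ?rhs"
  proof -
    have "(\<lambda>\<omega>. \<eta> (fst (snd \<omega>)) * F (1, snd \<omega>) + (1 - \<eta> (fst (snd \<omega>))) * F (2, snd \<omega>)) \<in> borel_measurable J"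
      by measurable
    moreover have "0 \<le> \<eta> (fst (snd \<omega>)) * F (1, snd \<omega>) + (1 - \<eta> (fst (snd \<omega>))) * F (2, snd \<omega>)"
      if "\<omega> \<in> space J" for \<omega>
      using that eta_bounds F_nonneg by (auto simp: space_joint)
    ultimately show ?thesis
      by (subst nn_integral_joint) (simp_all add: distrib_right mult.assoc)
  qed
  finally show ?thesis .
qed

lemma measurable_classifier_joint:
  assumes "classifier M g"
  shows "(\<lambda>\<omega>. g (fst (snd \<omega>)) (snd (snd \<omega>))) \<in> J \<rightarrow>\<^sub>M count_space UNIV"
proof -
  have "(\<lambda>(x, u). g x u) \<in> M \<Otimes>\<^sub>M lborel \<rightarrow>\<^sub>M count_space UNIV"
    using assms unfolding classifier_def
    by (subst measurable_cong_sets[OF sets_pair_measure_cong[OF refl sets_lborel] refl]) blast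
  from measurable_compose[OF measurable_snd this] show ?thesis
    unfolding measurable_cong_sets[OF sets_joint refl] by (simp add: case_prod_beta')
qed

lemma measurable_label_joint [measurable]: "(fst :: nat \<times> 'a \<times> real \<Rightarrow> nat) \<in> J \<rightarrow>\<^sub>M count_space UNIV"
proof -
  have "(\<lambda>i::nat. i) \<in> count_space {1, 2} \<rightarrow>\<^sub>M count_space UNIV"
    by (simp add: measurable_count_space_eq1)
  from measurable_compose[OF measurable_fst this] show ?thesis
    unfolding measurable_cong_sets[OF sets_joint refl] by simp
qed

definition decision_set :: "('a \<Rightarrow> real \<Rightarrow> nat) \<Rightarrow> (nat \<times> 'a \<times> real) set" where
  "decision_set g = {(i, x, u) \<in> space J. g x u \<noteq> 0}"

definition error_set :: "('a \<Rightarrow> real \<Rightarrow> nat) \<Rightarrow> (nat \<times> 'a \<times> real) set" where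
  "error_set g = {(i, x, u) \<in> space J. g x u \<noteq> 0 \<and> g x u \<noteq> i}"

lemma sets_decision_set [measurable]: "classifier M g \<Longrightarrow> decision_set g \<in> sets J"
  and sets_error_set [measurable]: "classifier M g \<Longrightarrow> error_set g \<in> sets J"
proof -
  assume [measurable]: "classifier M g"
  note [measurable] = measurable_classifier_joint[OF this]
  have "decision_set g = {\<omega> \<in> space J. g (fst (snd \<omega>)) (snd (snd \<omega>)) \<noteq> 0}"
    by (auto simp: decision_set_def)
  also have "\<dots> \<in> sets J" by measurable
  finally show "decision_set g \<in> sets J" .
  have "error_set g = {\<omega> \<in> space J. g (fst (snd \<omega>)) (snd (snd \<omega>)) \<noteq> 0 \<and>
      (fst \<omega> = 1 \<and> g (fst (snd \<omega>)) (snd (snd \<omega>)) \<noteq> 1 \<or> fst \<omega> = 2 \<and> g (fst (snd \<omega>)) (snd (snd \<omega>)) \<noteq> 2)}"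
    by (auto simp: error_set_def space_joint)
  also have "\<dots> \<in> sets J" by measurable
  finally show "error_set g \<in> sets J" .
qed

lemma measure_decision_set:
  assumes "classifier M g"
  shows "measure J (decision_set g) = 1 - indecision_prob J g"
proof -
  have "{(i, x, u) \<in> space J. g x u = 0} = space J - decision_set g"
    by (auto simp: decision_set_def)
  with assms show ?thesis
    by (simp add: indecision_prob_def joint.prob_compl)
qed

definition error_rate :: "('a \<Rightarrow> real \<Rightarrow> nat) \<Rightarrow> 'a \<Rightarrow> real \<Rightarrow> real" where
  "error_rate g x u = (if g x u = 1 then 1 - \<eta> x else if g x u = 2 then \<eta> x else 0)"

definition decided_Z :: "('a \<Rightarrow> real \<Rightarrow> nat) \<Rightarrow> real" where
  "decided_Z g = (\<integral>\<omega>. Z (fst (snd \<omega>)) * indicator (decision_set g) \<omega> \<partial>J)"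

lemma error_rate_measurable [measurable]:
  "classifier M g \<Longrightarrow> (\<lambda>\<omega>. error_rate g (fst (snd \<omega>)) (snd (snd \<omega>))) \<in> borel_measurable J"
  using measurable_classifier_joint[of g] unfolding error_rate_def by measurable

lemma error_rate_bounds:
  assumes "x \<in> space M" shows "0 \<le> error_rate g x u" "error_rate g x u \<le> 1"
  using eta_bounds[OF assms] by (auto simp: error_rate_def)

lemma Z_le_error_rate:
  assumes "classifier M g" "g x u \<noteq> 0" "x \<in> space M"
  shows "Z x \<le> error_rate g x u"
proof -
  have "g x u \<in> {0, 1, 2}" using assms(1) by (simp add: classifier_def)
  with assms(2) show ?thesis by (auto simp: error_rate_def Zfun_def)
qed

lemma measure_error_set:
  assumes g: "classifier M g"
  shows "measure J (error_set g) = (\<integral>\<omega>. error_rate g (fst (snd \<omega>)) (snd (snd \<omega>)) \<partial>J)"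
proof -
  have "emeasure J (error_set g) = (\<integral>\<^sup>+ \<omega>. ennreal (indicator (error_set g) \<omega>) \<partial>J)"
    using g by (simp add: ennreal_indicator)
  also have "\<dots> = (\<integral>\<^sup>+ \<omega>. ennreal (\<eta> (fst (snd \<omega>)) * indicator (error_set g) (1, snd \<omega>) +
      (1 - \<eta> (fst (snd \<omega>))) * indicator (error_set g) (2, snd \<omega>)) \<partial>J)"
    using g by (intro nn_integral_joint_average_label) auto
  also have "\<dots> = (\<integral>\<^sup>+ \<omega>. ennreal (error_rate g (fst (snd \<omega>)) (snd (snd \<omega>))) \<partial>J)"
  proof (rule nn_integral_cong)
    fix \<omega> assume "\<omega> \<in> space J"
    moreover have "g (fst (snd \<omega>)) (snd (snd \<omega>)) \<in> {0, 1, 2}"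
      using g by (simp add: classifier_def)
    ultimately show "ennreal (\<eta> (fst (snd \<omega>)) * indicator (error_set g) (1, snd \<omega>) +
        (1 - \<eta> (fst (snd \<omega>))) * indicator (error_set g) (2, snd \<omega>)) =
      ennreal (error_rate g (fst (snd \<omega>)) (snd (snd \<omega>)))"
      by (auto simp: error_set_def error_rate_def space_joint indicator_def)
  qed
  finally have "measure J (error_set g) = enn2real (\<integral>\<^sup>+ \<omega>. ennreal (error_rate g (fst (snd \<omega>)) (snd (snd \<omega>))) \<partial>J)"
    by (simp add: measure_def)
  also have "\<dots> = (\<integral>\<omega>. error_rate g (fst (snd \<omega>)) (snd (snd \<omega>)) \<partial>J)"
    using g error_rate_bounds by (intro integral_eq_nn_integral[symmetric] AE_I2) (auto simp: space_joint)
  finally show ?thesis .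
qed

lemma integrable_Z_decision_set:
  assumes "classifier M g"
  shows "integrable J (\<lambda>\<omega>. (Z (fst (snd \<omega>)) - c) * indicator (decision_set g) \<omega>)"
proof (rule joint.integrable_const_bound[where B="1/2 + \<bar>c\<bar>"])
  show "AE \<omega> in J. norm ((Z (fst (snd \<omega>)) - c) * indicator (decision_set g) \<omega>) \<le> 1/2 + \<bar>c\<bar>"
  proof (rule AE_I2)
    fix \<omega> assume "\<omega> \<in> space J"
    then have "fst (snd \<omega>) \<in> space M" by (auto simp: space_joint)
    from Z_bounds[OF this] show "norm ((Z (fst (snd \<omega>)) - c) * indicator (decision_set g) \<omega>) \<le> 1/2 + \<bar>c\<bar>"
      by (simp add: indicator_def; arith)
  qed
qed (use assms in measurable)

lemma decided_Z_minus_measure: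
  assumes "classifier M g"
  shows "decided_Z g - c * measure J (decision_set g) =
    (\<integral>\<omega>. (Z (fst (snd \<omega>)) - c) * indicator (decision_set g) \<omega> \<partial>J)"
proof -
  have "integrable J (\<lambda>\<omega>. Z (fst (snd \<omega>)) * indicator (decision_set g) \<omega>)"
    using integrable_Z_decision_set[OF assms, of 0] by simp
  moreover have "integrable J (\<lambda>\<omega>. c * indicator (decision_set g) \<omega> :: real)"
    using assms by (intro integrable_mult_right integrable_real_indicator) (auto simp: joint.emeasure_finite less_top[symmetric])
  ultimately show ?thesis
    using assms unfolding decided_Z_def left_diff_distrib
    by (subst Bochner_Integration.integral_diff) (auto simp: Int_absorb2 sets.sets_into_space)
qed

lemma decided_Z_le_measure_error_set:
  assumes g: "classifier M g"
  shows "decided_Z g \<le> measure J (error_set g)"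
  unfolding decided_Z_def measure_error_set[OF g]
proof (rule integral_mono)
  show "integrable J (\<lambda>\<omega>. Z (fst (snd \<omega>)) * indicator (decision_set g) \<omega>)"
    using integrable_Z_decision_set[OF g, of 0] by simp
  show "integrable J (\<lambda>\<omega>. error_rate g (fst (snd \<omega>)) (snd (snd \<omega>)))"
    using g error_rate_bounds
    by (intro joint.integrable_const_bound[where B=1] AE_I2) (auto simp: space_joint)
  fix \<omega> assume "\<omega> \<in> space J"
  then show "Z (fst (snd \<omega>)) * indicator (decision_set g) \<omega> \<le> error_rate g (fst (snd \<omega>)) (snd (snd \<omega>))"
    using Z_le_error_rate[OF g] error_rate_bounds
    by (auto simp: decision_set_def space_joint indicator_def)
qed

lemma is_oracleD:
  assumes "is_oracle M p1 p2 f1 f2 \<gamma> \<tau> g"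
  shows "classifier M g" "measure J (decision_set g) = 1 - \<gamma>" "1 - \<tau> \<le> 1/2" "0 \<le> 1 - \<tau>"
  using assms measure_decision_set[of g] by (auto simp: is_oracle_def)

lemma AE_oracle_threshold:
  assumes "is_oracle M p1 p2 f1 f2 \<gamma> \<tau> g"
  shows "AE \<omega> in J. (\<omega> \<in> decision_set g \<longrightarrow> Z (fst (snd \<omega>)) \<le> 1 - \<tau>) \<and>
    (\<omega> \<notin> decision_set g \<longrightarrow> 1 - \<tau> \<le> Z (fst (snd \<omega>)))"
proof -
  have "AE (i, x, u) in J. (1 - \<tau> < \<eta> x \<and> \<eta> x < \<tau> \<longrightarrow> g x u = 0) \<and>
      (g x u = 0 \<longrightarrow> 1 - \<tau> \<le> \<eta> x \<and> \<eta> x \<le> \<tau>)"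
    using assms unfolding is_oracle_def by (auto elim: eventually_mono)
  then show ?thesis
    using AE_space by eventually_elim (auto simp: decision_set_def Zfun_def)
qed

lemma AE_oracle_error_rate:
  assumes "is_oracle M p1 p2 f1 f2 \<gamma> \<tau> g"
  shows "AE \<omega> in J. error_rate g (fst (snd \<omega>)) (snd (snd \<omega>)) = Z (fst (snd \<omega>)) * indicator (decision_set g) \<omega>"
proof -
  have "AE (i, x, u) in J. (g x u = 1 \<longrightarrow> p2 * f2 x \<le> p1 * f1 x) \<and> (g x u = 2 \<longrightarrow> p1 * f1 x \<le> p2 * f2 x)"
    using assms unfolding is_oracle_def by (auto elim: eventually_mono)
  then show ?thesis
    using AE_space AE_joint_mixture_pos
  proof eventually_elim
    case (elim \<omega>)
    then obtain i x u where \<omega>: "\<omega> = (i, x, u)" "x \<in> space M" and "0 < mixture x"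
      by (auto simp: space_joint)
    then have "p2 * f2 x \<le> p1 * f1 x \<longleftrightarrow> 1 - \<eta> x \<le> \<eta> x" "p1 * f1 x \<le> p2 * f2 x \<longleftrightarrow> \<eta> x \<le> 1 - \<eta> x"
      using eta_mixture[OF \<omega>(2)] by (metis mult_le_cancel_right_pos)+
    moreover have "g x u \<in> {0, 1, 2}"
      using assms by (simp add: is_oracle_def classifier_def)
    ultimately show ?case
      using elim by (auto simp: \<omega> error_rate_def Zfun_def decision_set_def)
  qed
qed

lemma oracle_measure_error_set:
  assumes "is_oracle M p1 p2 f1 f2 \<gamma> \<tau> g"
  shows "measure J (error_set g) = decided_Z g"
  unfolding measure_error_set[OF is_oracleD(1)[OF assms]] decided_Z_def
  using is_oracleD(1)[OF assms] AE_oracle_error_rate[OF assms]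
  by (intro integral_cong_AE) measurable

lemma oracle_lagrangian:
  assumes opt: "is_oracle M p1 p2 f1 f2 \<gamma> \<tau> g\<^sub>0" and g: "classifier M g"
  shows "decided_Z g\<^sub>0 - (1 - \<tau>) * measure J (decision_set g\<^sub>0) \<le>
    decided_Z g - (1 - \<tau>) * measure J (decision_set g)"
  unfolding decided_Z_minus_measure[OF g] decided_Z_minus_measure[OF is_oracleD(1)[OF opt]]
  using integrable_Z_decision_set[OF g] integrable_Z_decision_set[OF is_oracleD(1)[OF opt]]
proof (intro integral_mono_AE)
  show "AE \<omega> in J. (Z (fst (snd \<omega>)) - (1 - \<tau>)) * indicator (decision_set g\<^sub>0) \<omega>
      \<le> (Z (fst (snd \<omega>)) - (1 - \<tau>)) * indicator (decision_set g) \<omega>"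
    using AE_oracle_threshold[OF opt] by eventually_elim (auto simp: indicator_def)
qed

lemma cond_exp_Z_eq_decided_Z:
  "cond_exp_Z M p1 p2 f1 f2 g = decided_Z g / measure J (decision_set g)"
proof -
  have "(\<integral>\<omega>. Z (fst (snd \<omega>)) * indicator {(i, x, u). g x u \<noteq> 0} \<omega> \<partial>J) = decided_Z g"
    unfolding decided_Z_def
    by (intro Bochner_Integration.integral_cong) (auto simp: decision_set_def indicator_def)
  then show ?thesis
    by (simp add: cond_exp_Z_def decision_set_def)
qed

lemma cond_error_eq_measure:
  "cond_error J g = measure J (error_set g) / measure J (decision_set g)"
  by (simp add: cond_error_def error_set_def decision_set_def)

lemma Rrisk_eq_oracle:
  assumes opt: "is_oracle M p1 p2 f1 f2 \<gamma> \<tau> g\<^sub>0" and "\<gamma> < 1"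
  shows "Rrisk M p1 p2 f1 f2 \<gamma> = decided_Z g\<^sub>0 / (1 - \<gamma>)"
  unfolding Rrisk_def
proof (rule cInf_eq_minimum)
  note decision_g\<^sub>0 = is_oracleD[OF opt]
  show "decided_Z g\<^sub>0 / (1 - \<gamma>) \<in> {cond_error J g |g. classifier M g \<and> indecision_prob J g = \<gamma>}"
  proof (intro CollectI exI conjI)
    show "decided_Z g\<^sub>0 / (1 - \<gamma>) = cond_error J g\<^sub>0"
      using decision_g\<^sub>0(2) by (simp add: cond_error_eq_measure oracle_measure_error_set[OF opt])
  qed (use opt in \<open>simp_all add: is_oracle_def\<close>)
  fix r assume "r \<in> {cond_error J g |g. classifier M g \<and> indecision_prob J g = \<gamma>}"
  then obtain g where g: "classifier M g" and "indecision_prob J g = \<gamma>" and r: "r = cond_error J g"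
    by blast
  then have decision_g: "measure J (decision_set g) = 1 - \<gamma>"
    by (simp add: measure_decision_set)
  have "decided_Z g\<^sub>0 \<le> decided_Z g"
    using oracle_lagrangian[OF opt g] decision_g decision_g\<^sub>0(2) by simp
  also have "\<dots> \<le> measure J (error_set g)"
    by (rule decided_Z_le_measure_error_set[OF g])
  finally show "decided_Z g\<^sub>0 / (1 - \<gamma>) \<le> r"
    using \<open>\<gamma> < 1\<close> by (simp add: r cond_error_eq_measure decision_g divide_right_mono)
qed

lemma exists_Z_quantile:
  assumes "0 < s" "s \<le> 1"
  obtains c where "0 \<le> c" "c \<le> 1/2"
    "measure J {\<omega> \<in> space J. Z (fst (snd \<omega>)) < c} \<le> s"
    "s \<le> measure J {\<omega> \<in> space J. Z (fst (snd \<omega>)) \<le> c}"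
proof -
  define D where "D = distr J borel (\<lambda>\<omega>. Z (fst (snd \<omega>)))"
  interpret D: real_distribution D
    unfolding D_def by (intro joint.real_distribution_distr) measurable
  have measure_D: "measure D A = measure J {\<omega> \<in> space J. Z (fst (snd \<omega>)) \<in> A}" if "A \<in> sets borel" for A
    using that unfolding D_def by (subst measure_distr) (auto simp: vimage_def Int_def conj_commute)
  have "{\<omega> \<in> space J. Z (fst (snd \<omega>)) \<in> {..1/2}} = space J"
    using Z_bounds by (auto simp: space_joint)
  then have "cdf D (1/2) = 1"
    by (simp add: cdf_def measure_D joint.prob_space)
  then obtain c where "c \<le> 1/2" "measure D {..<c} \<le> s" "s \<le> cdf D c"
    using D.exists_quantile[of s "1/2"] assms by auto
  moreover have "0 \<le> c"
  proof (rule ccontr)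
    assume "\<not> 0 \<le> c"
    then have empty: "{\<omega> \<in> space J. Z (fst (snd \<omega>)) \<le> c} = {}"
      using Z_bounds by (force simp: space_joint)
    have "cdf D c = measure J {\<omega> \<in> space J. Z (fst (snd \<omega>)) \<le> c}"
      by (simp add: cdf_def measure_D)
    also have "\<dots> = 0"
      unfolding empty by simp
    finally show False
      using \<open>s \<le> cdf D c\<close> \<open>0 < s\<close> by simp
  qed
  ultimately show ?thesis
    by (intro that) (auto simp: cdf_def measure_D)
qed

lemma measure_joint_uniform_cut:
  assumes [measurable]: "B \<in> sets M" and "0 \<le> a" "a \<le> 1"
  shows "measure J {\<omega> \<in> space J. fst (snd \<omega>) \<in> B \<and> snd (snd \<omega>) \<le> a} =
    a * measure J {\<omega> \<in> space J. fst (snd \<omega>) \<in> B}"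
proof -
  have "{\<omega> \<in> space J. fst (snd \<omega>) \<in> B} = {\<omega> \<in> space J. fst (snd \<omega>) \<in> B \<and> snd (snd \<omega>) \<in> UNIV}"
    by simp
  then have "emeasure J {\<omega> \<in> space J. fst (snd \<omega>) \<in> B} = (\<integral>\<^sup>+ x. ennreal (mixture x * indicator B x) \<partial>M)"
    using emeasure_joint_rectangle[of B UNIV] by simp
  moreover have "{..a} \<inter> {0..1} = {0..a}"
    using assms by auto
  ultimately show ?thesis
    using emeasure_joint_rectangle[of B "{..a}"] assms
    by (simp add: measure_def enn2real_mult mult.commute)
qed

definition threshold_classifier :: "real \<Rightarrow> real \<Rightarrow> 'a \<Rightarrow> real \<Rightarrow> nat" where
  "threshold_classifier c a x u =
     (if Z x < c \<or> Z x = c \<and> u \<le> a then if p2 * f2 x \<le> p1 * f1 x then 1 else 2 else 0)"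

lemma classifier_threshold_classifier: "classifier M (threshold_classifier c a)"
  unfolding classifier_def threshold_classifier_def by measurable

lemma measure_decision_set_threshold_classifier:
  assumes "0 \<le> a" "a \<le> 1"
  shows "measure J (decision_set (threshold_classifier c a)) =
    measure J {\<omega> \<in> space J. Z (fst (snd \<omega>)) < c} + a * measure J {\<omega> \<in> space J. Z (fst (snd \<omega>)) = c}"
proof -
  define B where "B = {x \<in> space M. Z x = c}"
  have [measurable]: "B \<in> sets M" unfolding B_def by measurable
  have "threshold_classifier c a x u \<noteq> 0 \<longleftrightarrow> Z x < c \<or> Z x = c \<and> u \<le> a" for x u
    by (simp add: threshold_classifier_def)
  then have "decision_set (threshold_classifier c a) =
      {\<omega> \<in> space J. Z (fst (snd \<omega>)) < c \<or> Z (fst (snd \<omega>)) = c \<and> snd (snd \<omega>) \<le> a}"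
    unfolding decision_set_def by (simp add: case_prod_beta')
  also have "\<dots> = {\<omega> \<in> space J. Z (fst (snd \<omega>)) < c} \<union> {\<omega> \<in> space J. fst (snd \<omega>) \<in> B \<and> snd (snd \<omega>) \<le> a}"
    by (auto simp: B_def space_joint)
  moreover have "{\<omega> \<in> space J. Z (fst (snd \<omega>)) = c} = {\<omega> \<in> space J. fst (snd \<omega>) \<in> B}"
    by (auto simp: B_def space_joint)
  ultimately show ?thesis
    using measure_joint_uniform_cut[of B a] assms
    by (simp add: joint.finite_measure_Union B_def disjoint_iff)
qed

lemma is_oracle_threshold_classifier:
  assumes "0 \<le> c" "c \<le> 1/2" "indecision_prob J (threshold_classifier c a) = \<gamma>"
  shows "is_oracle M p1 p2 f1 f2 \<gamma> (1 - c) (threshold_classifier c a)"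
proof -
  have "c < \<eta> x \<and> \<eta> x < 1 - c \<longleftrightarrow> c < Z x" "c \<le> \<eta> x \<and> \<eta> x \<le> 1 - c \<longleftrightarrow> c \<le> Z x" for x
    by (auto simp: Zfun_def)
  then have "(1 - (1 - c) < \<eta> x \<and> \<eta> x < 1 - c \<longrightarrow> threshold_classifier c a x u = 0) \<and>
      (threshold_classifier c a x u = 0 \<longrightarrow> 1 - (1 - c) \<le> \<eta> x \<and> \<eta> x \<le> 1 - c) \<and>
      (threshold_classifier c a x u = 1 \<longrightarrow> p2 * f2 x \<le> p1 * f1 x) \<and>
      (threshold_classifier c a x u = 2 \<longrightarrow> p1 * f1 x \<le> p2 * f2 x)" for x u
    unfolding threshold_classifier_def by (simp add: not_less)
  then show ?thesis
    using assms classifier_threshold_classifier by (auto simp: is_oracle_def intro!: AE_I2)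
qed

lemma exists_oracle:
  assumes "0 \<le> \<gamma>" "\<gamma> < 1"
  shows "\<exists>\<tau> g. is_oracle M p1 p2 f1 f2 \<gamma> \<tau> g"
proof -
  obtain c where c: "0 \<le> c" "c \<le> 1/2" and
    below: "measure J {\<omega> \<in> space J. Z (fst (snd \<omega>)) < c} \<le> 1 - \<gamma>" and
    below_eq: "1 - \<gamma> \<le> measure J {\<omega> \<in> space J. Z (fst (snd \<omega>)) \<le> c}"
    using exists_Z_quantile[of "1 - \<gamma>"] assms by auto
  have "{\<omega> \<in> space J. Z (fst (snd \<omega>)) \<le> c} =
      {\<omega> \<in> space J. Z (fst (snd \<omega>)) < c} \<union> {\<omega> \<in> space J. Z (fst (snd \<omega>)) = c}"
    by auto
  then have "1 - \<gamma> \<le> measure J {\<omega> \<in> space J. Z (fst (snd \<omega>)) < c} + measure J {\<omega> \<in> space J. Z (fst (snd \<omega>)) = c}"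
    using below_eq by (simp add: joint.finite_measure_Union disjoint_iff)
  with below obtain a where "0 \<le> a" "a \<le> 1" and
    "measure J {\<omega> \<in> space J. Z (fst (snd \<omega>)) < c} + a * measure J {\<omega> \<in> space J. Z (fst (snd \<omega>)) = c} = 1 - \<gamma>"
    by (rule exists_interpolation_weight)
  then have "indecision_prob J (threshold_classifier c a) = \<gamma>"
    using measure_decision_set[OF classifier_threshold_classifier]
      measure_decision_set_threshold_classifier[of a c] by simp
  with c show ?thesis
    by (blast intro: is_oracle_threshold_classifier)
qed

lemma decided_Z_always_abstain: "decided_Z (\<lambda>x u. 0) = 0" "measure J (decision_set (\<lambda>x u. 0)) = 0"
  by (simp_all add: decided_Z_def decision_set_def case_prod_unfold)

lemma Rrisk_value_function:
  obtains A c :: "real \<Rightarrow> real"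
  where "\<And>m m'. m \<in> {0<..1} \<Longrightarrow> m' \<in> {0<..1} \<Longrightarrow> A m + c m * (m' - m) \<le> A m'"
    and "\<And>m. m \<in> {0<..1} \<Longrightarrow> 0 \<le> c m \<and> c m \<le> 1/2"
    and "\<And>m. m \<in> {0<..1} \<Longrightarrow> A m \<le> c m * m"
    and "\<And>\<gamma>. 0 \<le> \<gamma> \<Longrightarrow> \<gamma> < 1 \<Longrightarrow> Rrisk M p1 p2 f1 f2 \<gamma> = A (1 - \<gamma>) / (1 - \<gamma>)"
proof -
  obtain \<tau> g where opt: "\<And>\<gamma>. 0 \<le> \<gamma> \<Longrightarrow> \<gamma> < 1 \<Longrightarrow> is_oracle M p1 p2 f1 f2 \<gamma> (\<tau> \<gamma>) (g \<gamma>)"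
    using exists_oracle by metis
  define A where "A m = decided_Z (g (1 - m))" for m
  define c where "c m = 1 - \<tau> (1 - m)" for m
  have opt': "is_oracle M p1 p2 f1 f2 (1 - m) (\<tau> (1 - m)) (g (1 - m))" if "m \<in> {0<..1}" for m
    using opt[of "1 - m"] that by simp
  have lagrangian: "A m - c m * m \<le> decided_Z h - c m * measure J (decision_set h)"
    if "m \<in> {0<..1}" "classifier M h" for m h
    using oracle_lagrangian[OF opt'[OF that(1)] that(2)] is_oracleD(2)[OF opt'[OF that(1)]]
    by (simp add: A_def c_def)
  show ?thesis
  proof (rule that)
    fix m m' :: real assume "m \<in> {0<..1}" "m' \<in> {0<..1}"
    then show "A m + c m * (m' - m) \<le> A m'"
      using lagrangian[of m "g (1 - m')"] is_oracleD(1,2)[OF opt'[of m']]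
      by (simp add: A_def algebra_simps)
  next
    fix m :: real assume "m \<in> {0<..1}"
    then show "0 \<le> c m \<and> c m \<le> 1/2"
      using is_oracleD(3,4)[OF opt'] by (simp add: c_def)
    show "A m \<le> c m * m"
      using lagrangian[OF \<open>m \<in> {0<..1}\<close>, of "\<lambda>x u. 0"] decided_Z_always_abstain
      by (simp add: classifier_def)
  next
    fix \<gamma> :: real assume "0 \<le> \<gamma>" "\<gamma> < 1"
    then show "Rrisk M p1 p2 f1 f2 \<gamma> = A (1 - \<gamma>) / (1 - \<gamma>)"
      using Rrisk_eq_oracle[OF opt] by (simp add: A_def)
  qed
qed

lemma Rrisk_antimono:
  assumes "0 \<le> a" "a \<le> b" "b < 1"
  shows "Rrisk M p1 p2 f1 f2 b \<le> Rrisk M p1 p2 f1 f2 a"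
proof -
  obtain A c :: "real \<Rightarrow> real"
    where sub: "\<And>m m'. m \<in> {0<..1} \<Longrightarrow> m' \<in> {0<..1} \<Longrightarrow> A m + c m * (m' - m) \<le> A m'"
    and "\<And>m. m \<in> {0<..1} \<Longrightarrow> 0 \<le> c m \<and> c m \<le> 1/2"
    and chord: "\<And>m. m \<in> {0<..1} \<Longrightarrow> A m \<le> c m * m"
    and R: "\<And>\<gamma>. 0 \<le> \<gamma> \<Longrightarrow> \<gamma> < 1 \<Longrightarrow> Rrisk M p1 p2 f1 f2 \<gamma> = A (1 - \<gamma>) / (1 - \<gamma>)"
    by (fact Rrisk_value_function)
  have "A (1 - b) / (1 - b) \<le> A (1 - a) / (1 - a)"
    using assms by (intro subgradient_ratio_mono[where c=c] sub chord) auto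
  then show ?thesis
    using assms by (simp add: R)
qed

lemma Rrisk_continuous: "continuous_on {0..<1} (Rrisk M p1 p2 f1 f2)"
proof -
  obtain A c :: "real \<Rightarrow> real"
    where sub: "\<And>m m'. m \<in> {0<..1} \<Longrightarrow> m' \<in> {0<..1} \<Longrightarrow> A m + c m * (m' - m) \<le> A m'"
    and c: "\<And>m. m \<in> {0<..1} \<Longrightarrow> 0 \<le> c m \<and> c m \<le> 1/2"
    and "\<And>m. m \<in> {0<..1} \<Longrightarrow> A m \<le> c m * m"
    and R: "\<And>\<gamma>. 0 \<le> \<gamma> \<Longrightarrow> \<gamma> < 1 \<Longrightarrow> Rrisk M p1 p2 f1 f2 \<gamma> = A (1 - \<gamma>) / (1 - \<gamma>)"
    by (fact Rrisk_value_function)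
  have "(1/2)-lipschitz_on {0<..1} A"
  proof (rule subgradient_bounded_imp_lipschitz[where c=c])
    show "\<bar>c m\<bar> \<le> 1/2" if "m \<in> {0<..1}" for m
      using c[OF that] by simp
  qed (simp_all add: sub)
  then have "continuous_on {0<..1} A"
    by (rule lipschitz_on_continuous_on)
  then have "continuous_on {0..<1} (\<lambda>\<gamma>. A (1 - \<gamma>))"
    by (rule continuous_on_compose2) (auto intro: continuous_on_diff continuous_on_const continuous_on_id)
  then have "continuous_on {0..<1} (\<lambda>\<gamma>. A (1 - \<gamma>) / (1 - \<gamma>))"
    by (rule continuous_on_divide) (auto intro: continuous_on_diff continuous_on_const continuous_on_id)
  also have "?this \<longleftrightarrow> continuous_on {0..<1} (Rrisk M p1 p2 f1 f2)"
    by (rule continuous_on_cong) (simp_all add: R)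
  finally show ?thesis .
qed

end

theorem proposition1:
  fixes M :: "'a measure" and f1 f2 :: "'a \<Rightarrow> real" and p1 p2 :: real
  assumes "sigma_finite_measure M"
    and "f1 \<in> borel_measurable M" and "f2 \<in> borel_measurable M"
    and "\<And>x. x \<in> space M \<Longrightarrow> 0 \<le> f1 x" and "\<And>x. x \<in> space M \<Longrightarrow> 0 \<le> f2 x"
    and "(\<integral>\<^sup>+ x. ennreal (f1 x) \<partial>M) = 1" and "(\<integral>\<^sup>+ x. ennreal (f2 x) \<partial>M) = 1"
    and "density M (\<lambda>x. ennreal (f1 x)) \<noteq> density M (\<lambda>x. ennreal (f2 x))"
    and "0 < p1" and "0 < p2" and "p1 + p2 = 1"
  shows "(\<forall>\<gamma> \<tau> g. 0 \<le> \<gamma> \<and> \<gamma> < 1 \<and> is_oracle M p1 p2 f1 f2 \<gamma> \<tau> g \<longrightarrow>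
            Rrisk M p1 p2 f1 f2 \<gamma> = cond_exp_Z M p1 p2 f1 f2 g)
       \<and> continuous_on {0..<1} (Rrisk M p1 p2 f1 f2)
       \<and> (\<forall>a b. 0 \<le> a \<and> a \<le> b \<and> b < 1 \<longrightarrow> Rrisk M p1 p2 f1 f2 b \<le> Rrisk M p1 p2 f1 f2 a)"
proof -
  interpret classification_model M f1 f2 p1 p2
    by (rule classification_model.intro) (fact assms)+
  have "Rrisk M p1 p2 f1 f2 \<gamma> = cond_exp_Z M p1 p2 f1 f2 g"
    if "\<gamma> < 1" "is_oracle M p1 p2 f1 f2 \<gamma> \<tau> g" for \<gamma> \<tau> g
    using Rrisk_eq_oracle[OF that(2,1)] is_oracleD(2)[OF that(2)] by (simp add: cond_exp_Z_eq_decided_Z)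
  with Rrisk_continuous Rrisk_antimono show ?thesis
    by auto
qed

end
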